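(* For any pair of distinct letters $a,b\in V\Psi$, the vertex rim of $\mathrm{Fan}(a,b)$ is a reduced word in the letters of $V\Psi$, and the edge-rim of $\mathrm{Fan}(a,b)$ is a reduced word in the letters $\{x_e\}_{e\in E\Psi}$.
   Context: Let $(\Psi,\lambda)$ be a LOG presentation: $\Psi$ is a directed graph, with $\partial_-e,\partial_+e$ the initial and terminal vertices of $e\in E\Psi$, and $\lambda:E\Psi\to V\Psi$ is a labeling. The group $G(\Psi,\lambda)$ has generating set $V\Psi$ and relations $r_e=(\lambda e)(\partial_+e)(\lambda e)^{-1}(\partial_-e)^{-1}$, $e\in E\Psi$. Let $P(\Psi,\lambda)$ be the presentation 2-complex (single vertex $\ast$, one unit square cell $C_e$ per relation), and let $h:G(\Psi,\lambda)\to\mathbb{Z}$ be the epimorphism sending every generator to $1$, extended to a Morse function. For $e\in E\Psi$, $x_e\in\ker(h)$ denotes the element with $\partial_-e\cdot x_e=\lambda e$ (represented by the diagonal of $C_e$ at the middle level). $C_e^+$ is $C_e$ oriented so that its boundary reads $(\lambda e)(\partial_+e)(\lambda e)^{-1}(\partial_-e)^{-1}$, $C_e^-$ the reverse orientation; the vertex rims are $(\partial_-e)^{-1}(\lambda e)$ for $C_e^+$ and $(\lambda e)^{-1}(\partial_-e)$ for $C_e^-$, and the edge rims are $x_e^{\pm1}$ respectively. The link $\mathrm{Lk}(\ast,P(\Psi,\lambda))$ is the graph on vertices $v^\pm$, $v\in V\Psi$, with $u^{\epsilon_1},v^{\epsilon_2}$ adjacent iff some cell $C_e$ has adjacent edges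 $f,g$ labeled $u,v$ with $\partial_{\epsilon_1}f=\partial_{\epsilon_2}g$; the descending link is the full subgraph on $\{v^+\}$, the ascending link the full subgraph on $\{v^-\}$. Assume the link has girth at least $4$ and the ascending and descending links are trees. For an oriented edge $(a^+,b^+)$ of the descending link there is a unique $e\in E\Psi$ with either $\lambda e=a,\partial_+e=b$ or $\lambda e=b,\partial_+e=a$; $C_{(a,b)}$ denotes $C_e$ oriented so that its boundary reads (vertex rim)$\cdot b a^{-1}$. For distinct $a,b\in V\Psi$, let $(a^+=v_0^+,\dots,v_k^+=b^+)$ be the unique simple path in the descending link; $\mathrm{Fan}(a,b)$ is obtained from the cells $C_{(v_{i-1},v_i)}$, $i=1,\dots,k$, by identifying the upper edges of consecutive cells labeled $v_i$. Its vertex rim is the product of the vertex rims of $C_{(v_0,v_1)},\dots,C_{(v_{k-1},v_k)}$ in order, and its edge rim is the corresponding product of their edge rims. *)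

theory Defs
  imports Main
begin

(* ---------- LOG presentation data ----------
   The directed graph Psi has vertex type 'v and edge type 'e;
   src e = \<partial>_- e, tgt e = \<partial>_+ e, lab e = \<lambda> e. *)

(* ---------- Words in a free group ----------
   A word is a list of letters (x, True) = x, (x, False) = x^-1. *)
definition reduced_word :: "('x \<times> bool) list \<Rightarrow> bool" where
  "reduced_word w \<longleftrightarrow>
     (\<forall>i. Suc i < length w \<longrightarrow>
        \<not> (fst (w ! i) = fst (w ! Suc i) \<and> snd (w ! i) \<noteq> snd (w ! Suc i)))"

definition connects :: "('c \<Rightarrow> 'w \<times> 'w) \<Rightarrow> 'c \<Rightarrow> 'w \<Rightarrow> 'w \<Rightarrow> bool" where
  "connects ends c u w \<longleftrightarrow> ends c = (u, w) \<or> ends c = (w, u)"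

definition mg_walk :: "('c \<Rightarrow> 'w \<times> 'w) \<Rightarrow> 'c set \<Rightarrow> 'w list \<Rightarrow> bool" where
  "mg_walk ends F vs \<longleftrightarrow> vs \<noteq> [] \<and>
     (\<forall>i. Suc i < length vs \<longrightarrow> (\<exists>c\<in>F. connects ends c (vs ! i) (vs ! Suc i)))"

(* a cycle of length n = length vs: distinct vertices, distinct edges, edge i joins v_i and v_{i+1 mod n};
   length 1 = loop, length 2 = pair of parallel edges *)
definition mg_cycle :: "('c \<Rightarrow> 'w \<times> 'w) \<Rightarrow> 'c set \<Rightarrow> 'w list \<Rightarrow> 'c list \<Rightarrow> bool" where
  "mg_cycle ends F vs cs \<longleftrightarrow> vs \<noteq> [] \<and> length cs = length vs \<and> distinct vs \<and> distinct cs \<and>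
     set cs \<subseteq> F \<and>
     (\<forall>i < length vs. connects ends (cs ! i) (vs ! i) (vs ! ((Suc i) mod length vs)))"

definition girth_ge4 :: "('c \<Rightarrow> 'w \<times> 'w) \<Rightarrow> bool" where
  "girth_ge4 ends \<longleftrightarrow> (\<forall>vs cs. mg_cycle ends UNIV vs cs \<longrightarrow> 4 \<le> length vs)"

definition full_edges :: "('c \<Rightarrow> 'w \<times> 'w) \<Rightarrow> 'w set \<Rightarrow> 'c set" where
  "full_edges ends W = {c. fst (ends c) \<in> W \<and> snd (ends c) \<in> W}"

definition mg_full_tree :: "('c \<Rightarrow> 'w \<times> 'w) \<Rightarrow> 'w set \<Rightarrow> bool" where
  "mg_full_tree ends W \<longleftrightarrow> W \<noteq> {} \<and>
     (\<forall>u\<in>W. \<forall>w\<in>W. \<exists>vs. mg_walk ends (full_edges ends W) vs \<and> hd vs = u \<and> last vs = w) \<and>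
     (\<forall>vs cs. \<not> mg_cycle ends (full_edges ends W) vs cs)"

(* ---------- The square cell C_e ----------
   Corners P0 (bottom), P1, P2 (top), P3; sides
   S0 : P0 -> P1 labelled lab e,  S1 : P1 -> P2 labelled tgt e,
   S2 : P3 -> P2 labelled lab e,  S3 : P0 -> P3 labelled src e,
   so that the boundary read from P0 is (lab e)(tgt e)(lab e)^-1(src e)^-1. *)
datatype side = S0 | S1 | S2 | S3
datatype corner = P0 | P1 | P2 | P3

fun side_label :: "('e \<Rightarrow> 'v) \<Rightarrow> ('e \<Rightarrow> 'v) \<Rightarrow> ('e \<Rightarrow> 'v) \<Rightarrow> 'e \<Rightarrow> side \<Rightarrow> 'v" where
  "side_label src tgt lab e S0 = lab e"
| "side_label src tgt lab e S1 = tgt e"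
| "side_label src tgt lab e S2 = lab e"
| "side_label src tgt lab e S3 = src e"

fun side_head :: "side \<Rightarrow> corner" where
  "side_head S0 = P1"
| "side_head S1 = P2"
| "side_head S2 = P2"
| "side_head S3 = P3"

fun corner_sides :: "corner \<Rightarrow> side \<times> side" where
  "corner_sides P0 = (S0, S3)"
| "corner_sides P1 = (S0, S1)"
| "corner_sides P2 = (S1, S2)"
| "corner_sides P3 = (S2, S3)"

(* ---------- The link Lk(star, P(Psi,lambda)) ----------
   vertices (v, True) = v^+, (v, False) = v^-; one edge for each corner of each cell;
   the corner q of C_e joins (label f)^{eps1} and (label g)^{eps2}, f,g the sides at q,
   eps = + iff q is the terminal endpoint of the side. *)
definition lk_ends :: "('e \<Rightarrow> 'v) \<Rightarrow> ('e \<Rightarrow> 'v) \<Rightarrow> ('e \<Rightarrow> 'v) \<Rightarrow> 'e \<times> corner \<Rightarrow> ('v \<times> bool) \<times> ('v \<times> bool)" where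
  "lk_ends src tgt lab ec = (case ec of (e, q) \<Rightarrow>
     (case corner_sides q of (f, g) \<Rightarrow>
       ((side_label src tgt lab e f, side_head f = q), (side_label src tgt lab e g, side_head g = q))))"

definition desc_vertices :: "('v \<times> bool) set" where "desc_vertices = {w. snd w}"
definition asc_vertices :: "('v \<times> bool) set" where "asc_vertices = {w. \<not> snd w}"

definition desc_spath :: "('e \<Rightarrow> 'v) \<Rightarrow> ('e \<Rightarrow> 'v) \<Rightarrow> ('e \<Rightarrow> 'v) \<Rightarrow> 'v \<Rightarrow> 'v \<Rightarrow> 'v list \<Rightarrow> bool" where
  "desc_spath src tgt lab a b ps \<longleftrightarrow> ps \<noteq> [] \<and> distinct ps \<and> hd ps = a \<and> last ps = b \<and>
     mg_walk (lk_ends src tgt lab) (full_edges (lk_ends src tgt lab) desc_vertices)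
             (map (\<lambda>v. (v, True)) ps)"

definition desc_path :: "('e \<Rightarrow> 'v) \<Rightarrow> ('e \<Rightarrow> 'v) \<Rightarrow> ('e \<Rightarrow> 'v) \<Rightarrow> 'v \<Rightarrow> 'v \<Rightarrow> 'v list" where
  "desc_path src tgt lab a b = (THE ps. desc_spath src tgt lab a b ps)"

(* ---------- Oriented cells and rims ----------
   orientation True = C_e^+, False = C_e^- *)
fun bd_word :: "('e \<Rightarrow> 'v) \<Rightarrow> ('e \<Rightarrow> 'v) \<Rightarrow> ('e \<Rightarrow> 'v) \<Rightarrow> 'e \<Rightarrow> bool \<Rightarrow> ('v \<times> bool) list" where
  "bd_word src tgt lab e True = [(lab e, True), (tgt e, True), (lab e, False), (src e, False)]"
| "bd_word src tgt lab e False = [(src e, True), (lab e, True), (tgt e, False), (lab e, False)]"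

fun vrim_cell :: "('e \<Rightarrow> 'v) \<Rightarrow> ('e \<Rightarrow> 'v) \<Rightarrow> ('e \<Rightarrow> 'v) \<Rightarrow> 'e \<Rightarrow> bool \<Rightarrow> ('v \<times> bool) list" where
  "vrim_cell src tgt lab e True = [(src e, False), (lab e, True)]"
| "vrim_cell src tgt lab e False = [(lab e, False), (src e, True)]"

(* edge rim x_e^{+-1} as a letter in the alphabet {x_e}, indexed by e *)
fun erim_cell :: "'e \<Rightarrow> bool \<Rightarrow> ('e \<times> bool) list" where
  "erim_cell e s = [(e, s)]"

(* the unique e realising the descending-link edge (a^+, b^+) *)
definition cell_edge :: "('e \<Rightarrow> 'v) \<Rightarrow> ('e \<Rightarrow> 'v) \<Rightarrow> ('e \<Rightarrow> 'v) \<Rightarrow> 'v \<Rightarrow> 'v \<Rightarrow> 'e" where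
  "cell_edge src tgt lab a b = (THE e. (lab e = a \<and> tgt e = b) \<or> (lab e = b \<and> tgt e = a))"

definition cell_orient :: "('e \<Rightarrow> 'v) \<Rightarrow> ('e \<Rightarrow> 'v) \<Rightarrow> ('e \<Rightarrow> 'v) \<Rightarrow> 'v \<Rightarrow> 'v \<Rightarrow> bool" where
  "cell_orient src tgt lab a b = (THE s. \<exists>n.
      rotate n (bd_word src tgt lab (cell_edge src tgt lab a b) s)
        = vrim_cell src tgt lab (cell_edge src tgt lab a b) s @ [(b, True), (a, False)])"

definition fan_vrim :: "('e \<Rightarrow> 'v) \<Rightarrow> ('e \<Rightarrow> 'v) \<Rightarrow> ('e \<Rightarrow> 'v) \<Rightarrow> 'v \<Rightarrow> 'v \<Rightarrow> ('v \<times> bool) list" where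
  "fan_vrim src tgt lab a b = (let ps = desc_path src tgt lab a b in
     concat (map (\<lambda>(u, w). vrim_cell src tgt lab (cell_edge src tgt lab u w) (cell_orient src tgt lab u w))
                 (zip ps (tl ps))))"

definition fan_erim :: "('e \<Rightarrow> 'v) \<Rightarrow> ('e \<Rightarrow> 'v) \<Rightarrow> ('e \<Rightarrow> 'v) \<Rightarrow> 'v \<Rightarrow> 'v \<Rightarrow> ('e \<times> bool) list" where
  "fan_erim src tgt lab a b = (let ps = desc_path src tgt lab a b in
     concat (map (\<lambda>(u, w). erim_cell (cell_edge src tgt lab u w) (cell_orient src tgt lab u w))
                 (zip ps (tl ps))))"

end

theory Submission
  imports Defs
begin

text \<open>Along the simple path a = v_0, ..., v_k = b of the descending link (it exists and is unique
  because that link is a tree), the cell of a step (u, w) comes from the unique edge e with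
  {lab e, tgt e} = {u, w}, and its vertex rim is (src e)^-1 u or w^-1 (src e), according to the
  orientation. A cancellation inside one rim would mean lab e = src e, a loop of the link; a
  cancellation where the rims of two consecutive cells meet makes two of their corners parallel
  edges of the link. Both are cycles of length less than 4. The edge rims x_e of consecutive cells
  cannot cancel because the cells differ, as v_(i-1) \<noteq> v_(i+1) on a simple path.\<close>

definition mg_adj :: "('c \<Rightarrow> 'w \<times> 'w) \<Rightarrow> 'c set \<Rightarrow> 'w \<Rightarrow> 'w \<Rightarrow> bool" where
  "mg_adj ends F x y \<longleftrightarrow> (\<exists>c\<in>F. connects ends c x y)"

lemma connects_sym: "connects ends c x y \<Longrightarrow> connects ends c y x"
  unfolding connects_def by blast

lemma mg_adj_sym: "mg_adj ends F x y \<Longrightarrow> mg_adj ends F y x"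
  unfolding mg_adj_def by (blast intro: connects_sym)

lemma mg_walk_iff_successively: "mg_walk ends F vs \<longleftrightarrow> vs \<noteq> [] \<and> successively (mg_adj ends F) vs"
  unfolding mg_walk_def successively_conv_nth mg_adj_def by blast

lemma successively_obtain_distinct:
  assumes "successively R vs" "vs \<noteq> []"
  obtains ps where "ps \<noteq> []" "distinct ps" "hd ps = hd vs" "last ps = last vs" "successively R ps"
  using assms
proof (induction vs arbitrary: thesis)
  case Nil then show ?case by simp
next
  case (Cons v rest)
  show ?case
  proof (cases "rest = []")
    case True
    then show ?thesis using Cons.prems(1)[of "[v]"] by simp
  next
    case False
    then obtain ps where ps: "ps \<noteq> []" "distinct ps" "hd ps = hd rest" "last ps = last rest"
        "successively R ps"
      using Cons.IH Cons.prems(2) by (auto simp: successively_Cons)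
    show ?thesis
    proof (cases "v \<in> set ps")
      case True
      then obtain xs ys where "ps = xs @ v # ys" by (meson split_list)
      then show ?thesis
        using Cons.prems(1)[of "v # ys"] ps False by (simp add: successively_append_iff)
    next
      case v_new: False
      have "R v (hd ps)" using Cons.prems(2) False ps(3) by (cases rest) auto
      then show ?thesis
        using Cons.prems(1)[of "v # ps"] ps v_new False by (simp add: successively_Cons)
    qed
  qed
qed

lemma cyclic_successor_pairs_distinct:
  fixes i j n :: nat
  assumes "3 \<le> n" "i < n" "j < n" "i = Suc j mod n" "j = Suc i mod n"
  shows False
proof -
  have succ_mod: "Suc k mod n = 0 \<and> Suc k = n \<or> Suc k mod n = Suc k \<and> Suc k < n" if "k < n" for k
    using that by (auto simp: mod_Suc)
  from succ_mod[OF assms(3)] succ_mod[OF assms(2)] show False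
    unfolding assms(4,5)[symmetric] using assms(1) by (elim disjE conjE) linarith+
qed

lemma mg_cycle_of_closed_path:
  assumes "distinct vs" "3 \<le> length vs" "successively (mg_adj ends F) (vs @ [hd vs])"
  shows "\<exists>cs. mg_cycle ends F vs cs"
proof -
  define n where "n = length vs"
  have "vs \<noteq> []" using assms(2) by auto
  have step: "\<exists>c. c \<in> F \<and> connects ends c (vs ! i) (vs ! (Suc i mod n))" if "i < n" for i
  proof -
    have "(vs @ [hd vs]) ! Suc i = vs ! (Suc i mod n)"
    proof (cases "Suc i < n")
      case False
      then have "Suc i = n" using that by simp
      then show ?thesis using \<open>vs \<noteq> []\<close> by (simp add: n_def nth_append hd_conv_nth)
    qed (simp add: n_def nth_append)
    then show ?thesis
      using successively_nth[OF assms(3), of i] that by (auto simp: n_def nth_append mg_adj_def)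
  qed
  define cs where "cs = map (\<lambda>i. SOME c. c \<in> F \<and> connects ends c (vs ! i) (vs ! (Suc i mod n))) [0..<n]"
  have cs: "cs ! i \<in> F \<and> connects ends (cs ! i) (vs ! i) (vs ! (Suc i mod n))" if "i < n" for i
    using someI_ex[OF step[OF that]] that by (simp add: cs_def)
  have "distinct cs"
  proof (clarsimp simp: distinct_conv_nth)
    fix i j assume ij: "i < length cs" "j < length cs" "i \<noteq> j" "cs ! i = cs ! j"
    then have "i < n" "j < n" by (auto simp: cs_def)
    moreover have "Suc i mod n < n" "Suc j mod n < n" using \<open>i < n\<close> by auto
    moreover from cs[OF \<open>i < n\<close>] cs[OF \<open>j < n\<close>] ij(4)
    have "vs ! i = vs ! (Suc j mod n) \<and> vs ! (Suc i mod n) = vs ! j"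
      using ij(3) \<open>i < n\<close> \<open>j < n\<close> assms(1) unfolding connects_def n_def
      by (auto simp: nth_eq_iff_index_eq)
    ultimately have "i = Suc j mod n" "j = Suc i mod n"
      using assms(1) by (auto simp: n_def nth_eq_iff_index_eq)
    then show False
      using cyclic_successor_pairs_distinct assms(2) \<open>i < n\<close> \<open>j < n\<close> n_def by blast
  qed
  moreover have "length cs = n" by (simp add: cs_def)
  ultimately have "mg_cycle ends F vs cs"
    using cs assms(1) \<open>vs \<noteq> []\<close> unfolding mg_cycle_def n_def by (auto simp: in_set_conv_nth)
  then show ?thesis by blast
qed

lemma mg_cycle_of_disjoint_paths:
  assumes "distinct (a # xs @ y # rev zs)" "xs \<noteq> [] \<or> zs \<noteq> []"
    and "successively (mg_adj ends F) (a # xs @ [y])" "successively (mg_adj ends F) (a # zs @ [y])"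
  shows "\<exists>cs. mg_cycle ends F (a # xs @ y # rev zs) cs"
proof (rule mg_cycle_of_closed_path[OF assms(1)])
  show "3 \<le> length (a # xs @ y # rev zs)" using assms(2) by (cases xs; cases zs) auto
  have "successively (\<lambda>x y. mg_adj ends F y x) (a # zs @ [y])"
    using assms(4) by (rule successively_mono) (rule mg_adj_sym)
  then have "successively (mg_adj ends F) (y # rev zs @ [a])"
    using successively_rev[of "mg_adj ends F" "a # zs @ [y]"] by simp
  moreover have "successively (mg_adj ends F) (a # xs) \<and> mg_adj ends F (last (a # xs)) y"
    using assms(3) successively_append_iff[of _ "a # xs" "[y]"] by simp
  ultimately have "successively (mg_adj ends F) ((a # xs) @ y # rev zs @ [a])"
    by (simp only: successively_append_iff) simp
  then show "successively (mg_adj ends F) ((a # xs @ y # rev zs) @ [hd (a # xs @ y # rev zs)])"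
    by simp
qed

lemma mg_cycle_of_diverging_paths:
  assumes "distinct (a # p)" "distinct (a # q)" "p \<noteq> []" "q \<noteq> []" "hd p \<noteq> hd q"
    and "last p = last q" "successively (mg_adj ends F) (a # p)" "successively (mg_adj ends F) (a # q)"
  shows "\<exists>vs cs. mg_cycle ends F vs cs"
proof -
  have "last p \<in> set p" "last p \<in> set q" using assms(3,4,6) last_in_set by metis+
  then have "\<exists>x\<in>set p. x \<in> set q" ..
  then obtain xs y ys where p: "p = xs @ y # ys" "y \<in> set q" "\<forall>x\<in>set xs. x \<notin> set q"
    by (auto dest!: split_list_first_prop)
  then obtain zs ws where q: "q = zs @ y # ws" by (meson split_list)
  have "distinct (a # xs @ y # rev zs)" using assms(1,2) p q by auto
  moreover have "xs \<noteq> [] \<or> zs \<noteq> []" using assms(5) p q by auto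
  moreover have "successively (mg_adj ends F) (a # xs @ [y])"
    using assms(7) p successively_append_iff[of _ "a # xs @ [y]" ys] by simp
  moreover have "successively (mg_adj ends F) (a # zs @ [y])"
    using assms(8) q successively_append_iff[of _ "a # zs @ [y]" ws] by simp
  ultimately show ?thesis by (blast dest: mg_cycle_of_disjoint_paths)
qed

lemma mg_simple_path_unique:
  assumes acyclic: "\<forall>vs cs. \<not> mg_cycle ends F vs cs"
  shows "\<lbrakk>p \<noteq> []; q \<noteq> []; distinct p; distinct q; successively (mg_adj ends F) p;
     successively (mg_adj ends F) q; hd p = hd q; last p = last q\<rbrakk> \<Longrightarrow> p = q"
proof (induction p arbitrary: q)
  case (Cons a p')
  obtain q' where q: "q = a # q'" using Cons.prems(2,7) by (cases q) auto
  have last_eq_hd: "last (a # l) = a \<longleftrightarrow> l = []" if "distinct (a # l)" for l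
    using that by (cases l rule: rev_cases) auto
  have "p' = [] \<longleftrightarrow> q' = []"
    using last_eq_hd[of p'] last_eq_hd[of q'] Cons.prems(3,4,8) q by simp
  moreover have "p' = q'" if "p' \<noteq> []" "hd p' = hd q'"
    using Cons.IH[of q'] Cons.prems q that \<open>p' = [] \<longleftrightarrow> q' = []\<close> by (auto simp: successively_Cons)
  moreover have "hd p' = hd q'" if "p' \<noteq> []"
  proof (rule ccontr)
    assume "hd p' \<noteq> hd q'"
    then have "\<exists>vs cs. mg_cycle ends F vs cs"
      using Cons.prems q that \<open>p' = [] \<longleftrightarrow> q' = []\<close>
      by (intro mg_cycle_of_diverging_paths[of a p' q']) simp_all
    then show False using acyclic by blast
  qed
  ultimately show ?case using q by blast
qed simp

lemma successively_full_edges_in: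
  assumes "successively (mg_adj ends (full_edges ends W)) xs" "Suc 0 < length xs" "x \<in> set xs"
  shows "x \<in> W"
proof -
  have ends_in: "x \<in> W \<and> y \<in> W" if "mg_adj ends (full_edges ends W) x y" for x y
    using that unfolding mg_adj_def full_edges_def connects_def by (auto simp: prod_eq_iff)
  obtain i where i: "i < length xs" "x = xs ! i" using assms(3) by (auto simp: in_set_conv_nth)
  show ?thesis
  proof (cases "Suc i < length xs")
    case True
    then show ?thesis using ends_in successively_nth[OF assms(1) True] i by blast
  next
    case False
    then have "Suc (i - 1) < length xs" "Suc (i - 1) = i" using i assms(2) by auto
    then show ?thesis using ends_in successively_nth[OF assms(1), of "i - 1"] i by metis
  qed
qed

lemma girth_ge4_no_loop:
  assumes "girth_ge4 ends"
  shows "\<not> connects ends c x x"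
proof
  assume "connects ends c x x"
  then have "mg_cycle ends UNIV [x] [c]" unfolding mg_cycle_def by simp
  then show False using assms unfolding girth_ge4_def by fastforce
qed

lemma girth_ge4_no_parallel:
  assumes "girth_ge4 ends" "connects ends c x y" "connects ends d x y" "x \<noteq> y"
  shows "c = d"
proof (rule ccontr)
  assume "c \<noteq> d"
  then have "mg_cycle ends UNIV [x, y] [c, d]"
    using assms(2-4) connects_sym[OF assms(3)] unfolding mg_cycle_def by (auto simp: less_Suc_eq)
  then show False using assms(1) unfolding girth_ge4_def by fastforce
qed

definition inverse_letters :: "'x \<times> bool \<Rightarrow> 'x \<times> bool \<Rightarrow> bool" where
  "inverse_letters x y \<longleftrightarrow> fst x = fst y \<and> snd x \<noteq> snd y"

lemma reduced_word_iff_successively: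
  "reduced_word w \<longleftrightarrow> successively (\<lambda>x y. \<not> inverse_letters x y) w"
  unfolding reduced_word_def inverse_letters_def successively_conv_nth by blast

lemma successively_concat_path_steps:
  assumes "\<And>u w. D u w \<Longrightarrow> g u w \<noteq> []"
    and "\<And>u w. D u w \<Longrightarrow> successively P (g u w)"
    and "\<And>u w z. D u w \<Longrightarrow> D w z \<Longrightarrow> u \<noteq> z \<Longrightarrow> P (last (g u w)) (hd (g w z))"
  shows "successively D ps \<Longrightarrow> distinct ps \<Longrightarrow>
    successively P (concat (map (\<lambda>(u, w). g u w) (zip ps (tl ps))))"
proof (induction ps rule: induct_list012)
  case (3 x y zs)
  have "D x y" using "3.prems" by simp
  show ?case
  proof (cases zs)
    case Nil
    then show ?thesis using assms(2)[OF \<open>D x y\<close>] by simp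
  next
    case (Cons z zs')
    have "D y z" "x \<noteq> z" using "3.prems" Cons by auto
    moreover have "successively P (concat (map (\<lambda>(u, w). g u w) (zip (y # zs) zs)))"
      using "3.IH"(2) "3.prems" by (simp add: successively_Cons)
    ultimately show ?thesis
      using Cons assms(1)[OF \<open>D y z\<close>] assms(2)[OF \<open>D x y\<close>] assms(3)[OF \<open>D x y\<close>]
      by (simp add: successively_append_iff)
  qed
qed simp_all

lemma lk_ends_corner:
  "lk_ends src tgt lab (e, P0) = ((lab e, False), (src e, False))"
  "lk_ends src tgt lab (e, P1) = ((lab e, True), (tgt e, False))"
  "lk_ends src tgt lab (e, P2) = ((tgt e, True), (lab e, True))"
  "lk_ends src tgt lab (e, P3) = ((lab e, False), (src e, True))"
  by (simp_all add: lk_ends_def)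

definition desc_adj :: "('e \<Rightarrow> 'v) \<Rightarrow> ('e \<Rightarrow> 'v) \<Rightarrow> ('e \<Rightarrow> 'v) \<Rightarrow> 'v \<Rightarrow> 'v \<Rightarrow> bool" where
  "desc_adj src tgt lab u w \<longleftrightarrow>
     mg_adj (lk_ends src tgt lab) (full_edges (lk_ends src tgt lab) desc_vertices) (u, True) (w, True)"

definition cell_joins :: "('e \<Rightarrow> 'v) \<Rightarrow> ('e \<Rightarrow> 'v) \<Rightarrow> 'e \<Rightarrow> 'v \<Rightarrow> 'v \<Rightarrow> bool" where
  "cell_joins tgt lab e u w \<longleftrightarrow> (lab e = u \<and> tgt e = w) \<or> (lab e = w \<and> tgt e = u)"

lemma desc_adj_obtain_cell:
  assumes "desc_adj src tgt lab u w"
  obtains e where "cell_joins tgt lab e u w"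
proof -
  obtain e q where "(e, q) \<in> full_edges (lk_ends src tgt lab) desc_vertices"
      "connects (lk_ends src tgt lab) (e, q) (u, True) (w, True)"
    using assms unfolding desc_adj_def mg_adj_def by auto
  then have "cell_joins tgt lab e u w"
    by (cases q) (auto simp: lk_ends_corner full_edges_def desc_vertices_def connects_def cell_joins_def)
  then show thesis by (rule that)
qed

lemma rotate_four_cases:
  "rotate n [a, b, c, d] \<in> {[a, b, c, d], [b, c, d, a], [c, d, a, b], [d, a, b, c]}"
proof -
  have "rotate n [a, b, c, d] = rotate (n mod 4) [a, b, c, d]"
    using rotate_conv_mod[of n "[a, b, c, d]"] by simp
  moreover have "n mod 4 = 0 \<or> n mod 4 = Suc 0 \<or> n mod 4 = Suc (Suc 0) \<or> n mod 4 = Suc (Suc (Suc 0))"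
    by arith
  ultimately show ?thesis by (elim disjE) simp_all
qed

lemma rotate_bd_word_eq_iff:
  "(\<exists>n. rotate n (bd_word src tgt lab e s) = vrim_cell src tgt lab e s @ [(w, True), (u, False)])
     \<longleftrightarrow> (if s then lab e = u \<and> tgt e = w else lab e = w \<and> tgt e = u)"
  (is "(\<exists>n. ?rot n) \<longleftrightarrow> ?cond")
proof
  assume "\<exists>n. ?rot n"
  then obtain n where "?rot n" ..
  show ?cond
  proof (cases s)
    case True
    then show ?thesis using \<open>?rot n\<close>
        rotate_four_cases[of n "(lab e, True)" "(tgt e, True)" "(lab e, False)" "(src e, False)"]
      by auto
  next
    case False
    then show ?thesis using \<open>?rot n\<close>
        rotate_four_cases[of n "(src e, True)" "(lab e, True)" "(tgt e, False)" "(lab e, False)"]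
      by auto
  qed
next
  assume ?cond
  then have "?rot 3" by (cases s) (simp_all add: numeral_eq_Suc)
  then show "\<exists>n. ?rot n" ..
qed

definition cell_vrim :: "('e \<Rightarrow> 'v) \<Rightarrow> ('e \<Rightarrow> 'v) \<Rightarrow> ('e \<Rightarrow> 'v) \<Rightarrow> 'v \<Rightarrow> 'v \<Rightarrow> ('v \<times> bool) list" where
  "cell_vrim src tgt lab u w = vrim_cell src tgt lab (cell_edge src tgt lab u w) (cell_orient src tgt lab u w)"

definition cell_erim :: "('e \<Rightarrow> 'v) \<Rightarrow> ('e \<Rightarrow> 'v) \<Rightarrow> ('e \<Rightarrow> 'v) \<Rightarrow> 'v \<Rightarrow> 'v \<Rightarrow> ('e \<times> bool) list" where
  "cell_erim src tgt lab u w = erim_cell (cell_edge src tgt lab u w) (cell_orient src tgt lab u w)"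

context
  fixes src tgt lab :: "'e \<Rightarrow> 'v"
  assumes girth: "girth_ge4 (lk_ends src tgt lab)"
begin

lemma lab_ne_src: "lab e \<noteq> src e"
  using girth_ge4_no_loop[OF girth, of "(e, P0)" "(lab e, False)"]
  by (auto simp: lk_ends_corner connects_def)

lemma lab_ne_tgt: "lab e \<noteq> tgt e"
  using girth_ge4_no_loop[OF girth, of "(e, P2)" "(lab e, True)"]
  by (auto simp: lk_ends_corner connects_def)

lemma cell_joins_ne: "cell_joins tgt lab e u w \<Longrightarrow> u \<noteq> w"
  using lab_ne_tgt[of e] unfolding cell_joins_def by auto

lemma cell_joins_unique:
  assumes "cell_joins tgt lab e u w" "cell_joins tgt lab e' u w"
  shows "e = e'"
proof -
  have "connects (lk_ends src tgt lab) (d, P2) (u, True) (w, True)" if "cell_joins tgt lab d u w" for d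
    using that by (auto simp: lk_ends_corner connects_def cell_joins_def)
  then have "(e, P2) = (e', P2)"
    using girth_ge4_no_parallel[OF girth] cell_joins_ne[OF assms(1)] assms by blast
  then show ?thesis by simp
qed

lemma cell_edge_eq: "cell_joins tgt lab e u w \<Longrightarrow> cell_edge src tgt lab u w = e"
  unfolding cell_edge_def cell_joins_def[symmetric] by (blast intro: the_equality cell_joins_unique)

lemma cell_orient_eq:
  assumes "cell_joins tgt lab e u w"
  shows "cell_orient src tgt lab u w = (lab e = u)"
proof -
  have "(if s then lab e = u \<and> tgt e = w else lab e = w \<and> tgt e = u) \<longleftrightarrow> s = (lab e = u)" for s
    using assms cell_joins_ne[OF assms] by (cases s) (auto simp: cell_joins_def)
  then show ?thesis
    unfolding cell_orient_def cell_edge_eq[OF assms] rotate_bd_word_eq_iff by simp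
qed

lemma cell_vrim_eq:
  assumes "cell_joins tgt lab e u w"
  shows "cell_vrim src tgt lab u w =
    (if lab e = u then [(src e, False), (u, True)] else [(w, False), (src e, True)])"
  using assms unfolding cell_vrim_def cell_edge_eq[OF assms] cell_orient_eq[OF assms]
  by (auto simp: cell_joins_def)

lemma cell_erim_eq:
  assumes "cell_joins tgt lab e u w"
  shows "cell_erim src tgt lab u w = [(e, lab e = u)]"
  unfolding cell_erim_def cell_edge_eq[OF assms] cell_orient_eq[OF assms] by simp

lemma cell_vrim_junction:
  assumes e: "cell_joins tgt lab e u w" and e': "cell_joins tgt lab e' w z" and "u \<noteq> z"
  shows "\<not> inverse_letters (last (cell_vrim src tgt lab u w)) (hd (cell_vrim src tgt lab w z))"
proof -
  have "u \<noteq> w" "w \<noteq> z" using cell_joins_ne e e' by auto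
  consider "lab e = u" "tgt e = w" "lab e' = w" "tgt e' = z"
    | "lab e = u" "tgt e = w" "lab e' = z"
    | "lab e = w" "tgt e = u" "lab e' = w" "tgt e' = z"
    | "lab e = w" "tgt e = u" "lab e' = z" "tgt e' = w"
    using e e' \<open>u \<noteq> w\<close> \<open>w \<noteq> z\<close> unfolding cell_joins_def by blast
  then show ?thesis
  proof cases
    case 1
    have "u \<noteq> src e'"
      using girth_ge4_no_parallel[OF girth, of "(e, P1)" "(u, True)" "(w, False)" "(e', P3)"] 1
      by (auto simp: lk_ends_corner connects_def)
    then show ?thesis using 1 \<open>u \<noteq> w\<close> \<open>w \<noteq> z\<close> cell_vrim_eq[OF e] cell_vrim_eq[OF e']
      by (simp add: inverse_letters_def)
  next
    case 2
    then show ?thesis using \<open>u \<noteq> z\<close> \<open>w \<noteq> z\<close> cell_vrim_eq[OF e] cell_vrim_eq[OF e']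
      by (simp add: inverse_letters_def)
  next
    case 3
    have "src e \<noteq> src e'"
      using girth_ge4_no_parallel[OF girth, of "(e, P0)" "(w, False)" "(src e, False)" "(e', P0)"]
        3 \<open>u \<noteq> z\<close> lab_ne_src[of e]
      by (auto simp: lk_ends_corner connects_def)
    then show ?thesis using 3 \<open>u \<noteq> w\<close> \<open>w \<noteq> z\<close> cell_vrim_eq[OF e] cell_vrim_eq[OF e']
      by (simp add: inverse_letters_def)
  next
    case 4
    have "src e \<noteq> z"
      using girth_ge4_no_parallel[OF girth, of "(e, P3)" "(w, False)" "(z, True)" "(e', P1)"] 4
      by (auto simp: lk_ends_corner connects_def)
    then show ?thesis using 4 \<open>u \<noteq> w\<close> \<open>w \<noteq> z\<close> cell_vrim_eq[OF e] cell_vrim_eq[OF e']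
      by (simp add: inverse_letters_def)
  qed
qed

lemma fan_vrim_reduced:
  assumes "successively (desc_adj src tgt lab) ps" "distinct ps"
  shows "reduced_word (concat (map (\<lambda>(u, w). cell_vrim src tgt lab u w) (zip ps (tl ps))))"
  unfolding reduced_word_iff_successively
proof (rule successively_concat_path_steps[OF _ _ _ assms])
  fix u w assume "desc_adj src tgt lab u w"
  then obtain e where e: "cell_joins tgt lab e u w" by (rule desc_adj_obtain_cell)
  then show "cell_vrim src tgt lab u w \<noteq> []"
    and "successively (\<lambda>x y. \<not> inverse_letters x y) (cell_vrim src tgt lab u w)"
    using lab_ne_src[of e] unfolding cell_vrim_eq[OF e]
    by (auto simp: cell_joins_def inverse_letters_def)
next
  fix u w z assume "desc_adj src tgt lab u w" "desc_adj src tgt lab w z" "u \<noteq> z"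
  then show "\<not> inverse_letters (last (cell_vrim src tgt lab u w)) (hd (cell_vrim src tgt lab w z))"
    by (metis cell_vrim_junction desc_adj_obtain_cell)
qed

lemma fan_erim_reduced:
  assumes "successively (desc_adj src tgt lab) ps" "distinct ps"
  shows "reduced_word (concat (map (\<lambda>(u, w). cell_erim src tgt lab u w) (zip ps (tl ps))))"
  unfolding reduced_word_iff_successively
proof (rule successively_concat_path_steps[OF _ _ _ assms])
  fix u w z assume "desc_adj src tgt lab u w" "desc_adj src tgt lab w z" "u \<noteq> z"
  then obtain e e' where e: "cell_joins tgt lab e u w" and e': "cell_joins tgt lab e' w z"
    by (metis desc_adj_obtain_cell)
  then have "e \<noteq> e'" using \<open>u \<noteq> z\<close> cell_joins_ne[OF e] by (auto simp: cell_joins_def)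
  then show "\<not> inverse_letters (last (cell_erim src tgt lab u w)) (hd (cell_erim src tgt lab w z))"
    by (simp add: cell_erim_eq[OF e] cell_erim_eq[OF e'] inverse_letters_def)
qed (simp_all add: cell_erim_def)

end

lemma desc_spath_iff:
  "desc_spath src tgt lab a b ps \<longleftrightarrow>
     ps \<noteq> [] \<and> distinct ps \<and> hd ps = a \<and> last ps = b \<and> successively (desc_adj src tgt lab) ps"
  unfolding desc_spath_def mg_walk_iff_successively successively_map desc_adj_def by auto

lemma desc_spath_exists:
  assumes "mg_full_tree (lk_ends src tgt lab) desc_vertices" "a \<noteq> b"
  shows "\<exists>ps. desc_spath src tgt lab a b ps"
proof -
  let ?R = "mg_adj (lk_ends src tgt lab) (full_edges (lk_ends src tgt lab) desc_vertices)"
  have "(a, True) \<in> desc_vertices" "(b, True) \<in> desc_vertices" by (simp_all add: desc_vertices_def)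
  then obtain vs where "mg_walk (lk_ends src tgt lab) (full_edges (lk_ends src tgt lab) desc_vertices) vs"
      "hd vs = (a, True)" "last vs = (b, True)"
    using assms(1) unfolding mg_full_tree_def by blast
  then obtain qs where qs: "qs \<noteq> []" "distinct qs" "hd qs = (a, True)" "last qs = (b, True)"
      "successively ?R qs"
    unfolding mg_walk_iff_successively by (metis successively_obtain_distinct)
  have "Suc 0 < length qs"
    using qs(1,3,4) assms(2) by (cases qs; cases "tl qs") auto
  then have snd_qs: "\<forall>x\<in>set qs. snd x"
    using successively_full_edges_in[OF qs(5)] by (auto simp: desc_vertices_def)
  have qs_eq: "map (\<lambda>v. (v, True)) (map fst qs) = qs"
    unfolding map_map by (rule map_idI) (use snd_qs in \<open>auto simp: prod_eq_iff\<close>)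
  have "distinct (map fst qs)"
    using qs(2) qs_eq distinct_map by metis
  moreover have "hd (map fst qs) = a" "last (map fst qs) = b"
    using qs(1,3,4) by (simp_all add: hd_map last_map)
  ultimately have "desc_spath src tgt lab a b (map fst qs)"
    unfolding desc_spath_def mg_walk_iff_successively qs_eq using qs(1,5) by simp
  then show ?thesis ..
qed

lemma desc_spath_unique:
  assumes "mg_full_tree (lk_ends src tgt lab) desc_vertices"
    and "desc_spath src tgt lab a b p" "desc_spath src tgt lab a b q"
  shows "p = q"
proof -
  have "inj (\<lambda>v. (v, True))" by (auto intro: injI)
  moreover have "map (\<lambda>v. (v, True)) p = map (\<lambda>v. (v, True)) q"
    using assms(2,3) unfolding desc_spath_def mg_walk_iff_successively
    by (intro mg_simple_path_unique[where ends = "lk_ends src tgt lab"])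
       (use assms(1) in \<open>auto simp: mg_full_tree_def hd_map last_map distinct_map inj_on_def\<close>)
  ultimately show ?thesis by (metis inj_map_eq_map)
qed

lemma desc_spath_desc_path:
  assumes "mg_full_tree (lk_ends src tgt lab) desc_vertices" "a \<noteq> b"
  shows "desc_spath src tgt lab a b (desc_path src tgt lab a b)"
  using desc_spath_exists[OF assms] desc_spath_unique[OF assms(1)]
  unfolding desc_path_def by (metis theI)

theorem mainTheorem3:
  fixes src tgt lab :: "'e \<Rightarrow> 'v" and a b :: 'v
  assumes "girth_ge4 (lk_ends src tgt lab)"
    and "mg_full_tree (lk_ends src tgt lab) desc_vertices"
    and "mg_full_tree (lk_ends src tgt lab) asc_vertices"
    and "a \<noteq> b"
  shows "reduced_word (fan_vrim src tgt lab a b) \<and> reduced_word (fan_erim src tgt lab a b)"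
proof -
  define ps where "ps = desc_path src tgt lab a b"
  have "distinct ps" "successively (desc_adj src tgt lab) ps"
    using desc_spath_desc_path[OF assms(2,4)] unfolding ps_def desc_spath_iff by auto
  then show ?thesis
    using fan_vrim_reduced[OF assms(1)] fan_erim_reduced[OF assms(1)]
    unfolding fan_vrim_def fan_erim_def Let_def ps_def[symmetric] cell_vrim_def cell_erim_def
    by blast
qed

end
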